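(* Let $C$ be an $N\times N$ SPD matrix with Cholesky factor $L$ ($C=LL^T$), let $S\ge N$, and let $X^1,\dots,X^S$ be i.i.d. $\mathcal N(0,C)$. Let $\hat C=\frac1S\sum_{s=1}^SX^s(X^s)^T$ (invertible almost surely) with Cholesky factor $\hat L$. Then the preconditioned covariance $\hat L^{-1}C\hat L^{-T}$ satisfies: $\kappa(\hat L^{-1}C\hat L^{-T})$ has the same law as $\kappa(W)$ with $W\sim\mathrm{InverseWishart}(N,S)$.
   Context: For SPD $C$ with eigenvalues $\sigma_1^2\ge\cdots\ge\sigma_N^2>0$, $\kappa(C)=\big(\sum_{n=1}^N(\sigma_1/\sigma_n)^4\big)^{1/4}$. $\mathrm{Wishart}(N,S)$ is the law of $\frac1S\sum_{s=1}^SY^s(Y^s)^T$ with $Y^s$ i.i.d. $\mathcal N(0,I_N)$, and $W\sim\mathrm{InverseWishart}(N,S)$ means $W^{-1}\sim\mathrm{Wishart}(N,S)$. Preconditioning HMC sampling of $X\sim\mathcal N(0,C)$ with an invertible matrix $F$ means sampling $Z=F^{-1}X$, whose covariance is $F^{-1}CF^{-T}$. *)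

theory Defs
  imports "HOL-Analysis.Analysis" "HOL-Probability.Probability"
          "HOL-Computational_Algebra.Polynomial"
begin

definition spd :: "real^'n^'n \<Rightarrow> bool" where
  "spd C \<longleftrightarrow> transpose C = C \<and> (\<forall>x. x \<noteq> 0 \<longrightarrow> 0 < x \<bullet> (C *v x))"

definition charpoly :: "real^'n^'n \<Rightarrow> real poly" where
  "charpoly C = det (\<chi> i j. (if i = j then [:0, 1:] else 0) - [:C $ i $ j:])"

definition eigenvalues :: "real^'n^'n \<Rightarrow> real multiset" where
  "eigenvalues C = proots (charpoly C)"

text \<open>kappa(C) = (sum_n (sigma_1/sigma_n)^4)^(1/4), where sigma_n^2 are the
  eigenvalues of C and sigma_1^2 the largest one; (sigma_1/sigma_n)^4 = (sigma_1^2/sigma_n^2)^2.\<close>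
definition kappa :: "real^'n^'n \<Rightarrow> real" where
  "kappa C = (\<Sum>e\<in>#eigenvalues C. (Max (set_mset (eigenvalues C)) / e)^2) powr (1/4)"

definition gaussian_density :: "real^'n^'n \<Rightarrow> real^'n \<Rightarrow> real" where
  "gaussian_density C x =
     (2 * pi) powr (- real CARD('n) / 2) * det C powr (- 1 / 2)
     * exp (- (x \<bullet> (matrix_inv C *v x)) / 2)"

definition gaussian :: "real^'n^'n \<Rightarrow> (real^'n) measure" where
  "gaussian C = density lborel (\<lambda>x. ennreal (gaussian_density C x))"

text \<open>Law of S i.i.d. samples X^1..X^S (indexed 0..S-1).\<close>
definition iid_sample :: "nat \<Rightarrow> real^'n^'n \<Rightarrow> (nat \<Rightarrow> real^'n) measure" where
  "iid_sample S C = PiM {..<S} (\<lambda>_. gaussian C)"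

definition outer :: "real^'n \<Rightarrow> real^'n^'n" where
  "outer v = (\<chi> i j. v $ i * v $ j)"

definition emp_cov :: "nat \<Rightarrow> (nat \<Rightarrow> real^'n) \<Rightarrow> real^'n^'n" where
  "emp_cov S X = (1 / real S) *\<^sub>R (\<Sum>s<S. outer (X s))"

definition cholesky :: "real^('n::{finite,wellorder})^('n::{finite,wellorder}) \<Rightarrow> real^('n::{finite,wellorder})^('n::{finite,wellorder})" where
  "cholesky C = (THE L. (\<forall>i j. i < j \<longrightarrow> L $ i $ j = 0) \<and> (\<forall>i. 0 < L $ i $ i)
                      \<and> L ** transpose L = C)"

definition precond :: "real^'n^'n \<Rightarrow> real^'n^'n \<Rightarrow> real^'n^'n" where
  "precond F C = matrix_inv F ** C ** transpose (matrix_inv F)"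

end

theory Submission
  imports Defs
begin

text \<open>Write \<open>C = F F\<^sup>T\<close> with \<open>F\<close> the Cholesky factor of \<open>C\<close>. Then the samples are
  \<open>X\<^sup>s = F Y\<^sup>s\<close> with \<open>Y\<^sup>s\<close> i.i.d. standard normal, and their empirical covariance is \<open>F W F\<^sup>T\<close>,
  \<open>W\<close> being that of the \<open>Y\<^sup>s\<close>. If \<open>L\<close> is the Cholesky factor of \<open>F W F\<^sup>T\<close> and \<open>M = L\<^sup>-\<^sup>1 F\<close>, the
  preconditioned covariance is \<open>M M\<^sup>T\<close>, while \<open>M W M\<^sup>T = I\<close> gives \<open>W\<^sup>-\<^sup>1 = M\<^sup>T M\<close>; the two are
  similar, so they have the same eigenvalues and the same \<open>\<kappa>\<close>. The identity fails only where \<open>W\<close>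
  is singular, which for \<open>S \<ge> N\<close> is a null event: inserting the first \<open>N\<close> samples one at a
  time, each of them has to fall into a hyperplane determined by the previous ones.\<close>

section \<open>Similarity invariance of \<open>\<kappa>\<close>\<close>

lemma mat_mult_commute:
  fixes A :: "'a::comm_semiring_1^'n^'n"
  shows "mat c ** A = A ** mat c"
  by (simp add: vec_eq_iff matrix_matrix_mult_def mat_def if_distrib if_distribR mult.commute
      cong: if_cong)

lemma matrix_mult_diff_distrib:
  fixes A :: "'a::comm_ring_1^'n^'m"
  shows "A ** (B - C) = A ** B - A ** C" and "(B - C) ** D = B ** D - C ** D"
  by (simp_all add: matrix_matrix_mult_def vec_eq_iff sum_subtractf algebra_simps)

definition const_poly_matrix :: "'a::zero^'n^'m \<Rightarrow> 'a poly^'n^'m" where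
  "const_poly_matrix A = (\<chi> i j. [:A $ i $ j:])"

lemma const_poly_sum: "[:sum f S:] = (\<Sum>x\<in>S. [:f x:])"
  by (induct S rule: infinite_finite_induct) (auto, metis add_pCons add.right_neutral)

lemma const_poly_matrix_mult:
  fixes A :: "'a::comm_semiring_1^'n^'m"
  shows "const_poly_matrix (A ** B) = const_poly_matrix A ** const_poly_matrix B"
  by (simp add: const_poly_matrix_def matrix_matrix_mult_def vec_eq_iff const_poly_sum ac_simps)

lemma const_poly_matrix_one: "const_poly_matrix (mat 1) = mat 1"
  by (simp add: const_poly_matrix_def vec_eq_iff mat_def)

lemma charpoly_eq_det: "charpoly A = det (mat [:0, 1:] - const_poly_matrix A)"
  unfolding charpoly_def const_poly_matrix_def mat_def
  by (rule arg_cong[where f = det]) (simp add: vec_eq_iff)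

lemma charpoly_similar:
  fixes A P Q :: "real^'n^'n"
  assumes "Q ** P = mat 1"
  shows "charpoly (Q ** A ** P) = charpoly A"
proof -
  let ?c = const_poly_matrix and ?X = "mat [:0, 1:] :: real poly^'n^'n"
  have "?c Q ** ?X ** ?c P = ?X"
    by (metis assms const_poly_matrix_mult const_poly_matrix_one mat_mult_commute
        matrix_mul_assoc matrix_mul_rid)
  then have "?X - ?c (Q ** A ** P) = ?c Q ** (?X - ?c A) ** ?c P"
    by (simp add: matrix_mult_diff_distrib const_poly_matrix_mult matrix_mul_assoc)
  then have "charpoly (Q ** A ** P) = det (?c Q ** ?c P) * det (?X - ?c A)"
    by (simp add: charpoly_eq_det det_mul)
  then show ?thesis
    by (simp add: assms const_poly_matrix_one charpoly_eq_det flip: const_poly_matrix_mult)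
qed

lemma kappa_similar:
  fixes A P Q :: "real^'n^'n"
  assumes "Q ** P = mat 1"
  shows "kappa (Q ** A ** P) = kappa A"
  unfolding kappa_def eigenvalues_def charpoly_similar[OF assms] ..

lemma kappa_mult_commute:
  fixes A B :: "real^'n^'n"
  assumes "invertible A"
  shows "kappa (B ** A) = kappa (A ** B)"
proof -
  obtain A' where "A' ** A = mat 1" using assms invertible_left_inverse by blast
  then show ?thesis
    using kappa_similar[of A' A "A ** B"] by (simp add: matrix_mul_assoc)
qed

section \<open>Cholesky factorization\<close>

definition diag_mat :: "('n \<Rightarrow> 'a::zero) \<Rightarrow> 'a^'n^'n" where
  "diag_mat d = (\<chi> i j. if i = j then d i else 0)"

lemma diag_mat_mult_vec: "(diag_mat d *v x) $ i = d i * x $ i"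
  by (simp add: diag_mat_def matrix_vector_mult_def if_distrib if_distribR cong: if_cong)

lemma matrix_mult_diag_mat: "(A ** diag_mat d) $ i $ j = A $ i $ j * d j"
  by (simp add: diag_mat_def matrix_matrix_mult_def if_distrib if_distribR cong: if_cong)

lemma diag_mat_mult: "diag_mat a ** diag_mat b = diag_mat (\<lambda>i. a i * b i)"
  by (simp add: vec_eq_iff matrix_mult_diag_mat) (simp add: diag_mat_def)

lemma transpose_diag_mat: "transpose (diag_mat d) = diag_mat d"
  by (simp add: vec_eq_iff transpose_def diag_mat_def)

lemma diag_mat_one: "diag_mat (\<lambda>_. 1) = mat 1"
  by (simp add: vec_eq_iff diag_mat_def mat_def)

definition cholesky_factor ::
    "real^('n::{finite,wellorder})^('n::{finite,wellorder})
      \<Rightarrow> real^('n::{finite,wellorder})^('n::{finite,wellorder}) \<Rightarrow> bool" where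
  "cholesky_factor C L \<longleftrightarrow>
     (\<forall>i j. i < j \<longrightarrow> L $ i $ j = 0) \<and> (\<forall>i. 0 < L $ i $ i) \<and> L ** transpose L = C"

lemma cholesky_eq_The: "cholesky C = (THE L. cholesky_factor C L)"
  unfolding cholesky_def cholesky_factor_def ..

lemma cholesky_factor_det_pos:
  assumes "cholesky_factor C L"
  shows "0 < det L"
  using assms unfolding cholesky_factor_def
  by (subst det_lowerdiagonal[of L]) (auto intro: prod_pos)

lemma cholesky_factor_invertible:
  assumes "cholesky_factor C L"
  shows "invertible L" and "invertible C"
proof -
  have "det L \<noteq> 0" using cholesky_factor_det_pos[OF assms] by simp
  moreover have "det C = det L * det L"
    using assms by (auto simp: cholesky_factor_def det_mul)
  ultimately show "invertible L" "invertible C" by (simp_all add: invertible_det_nz)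
qed

lemma sum_UNIV_eq_sum_lessThan_plus:
  fixes f :: "'n::{finite,wellorder} \<Rightarrow> 'a::comm_monoid_add"
  assumes "\<And>k. j < k \<Longrightarrow> f k = 0"
  shows "(\<Sum>k\<in>UNIV. f k) = (\<Sum>k\<in>{..<j}. f k) + f j"
proof -
  have "(\<Sum>k\<in>UNIV. f k) = (\<Sum>k\<in>insert j {..<j}. f k)"
    using assms by (intro sum.mono_neutral_right) (auto simp: not_less_iff_gr_or_eq, metis neq_iff)
  then show ?thesis by (simp add: add.commute)
qed

text \<open>By induction over the columns: the \<open>(i, j)\<close> entry of \<open>L L\<^sup>T\<close> determines
  \<open>L\<^sub>i\<^sub>j L\<^sub>j\<^sub>j\<close> from the columns \<open>k < j\<close>.\<close>
lemma cholesky_factor_unique: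
  assumes "cholesky_factor C L1" and "cholesky_factor C L2"
  shows "L1 = L2"
proof -
  have lo1: "\<And>i j. i < j \<Longrightarrow> L1$i$j = 0" and p1: "\<And>i. 0 < L1$i$i"
    and lo2: "\<And>i j. i < j \<Longrightarrow> L2$i$j = 0" and p2: "\<And>i. 0 < L2$i$i"
    and eq: "L1 ** transpose L1 = L2 ** transpose L2"
    using assms unfolding cholesky_factor_def by auto
  have "\<forall>i. L1$i$j = L2$i$j" for j
  proof (induction j rule: less_induct)
    case (less j)
    have col: "L1$i$j * L1$j$j = L2$i$j * L2$j$j" for i
    proof -
      have "(\<Sum>k\<in>UNIV. L1$i$k * L1$j$k) = (\<Sum>k\<in>UNIV. L2$i$k * L2$j$k)"
        using arg_cong[OF eq, of "\<lambda>M. M$i$j"]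
        by (simp add: matrix_matrix_mult_def transpose_def)
      moreover have "(\<Sum>k\<in>{..<j}. L1$i$k * L1$j$k) = (\<Sum>k\<in>{..<j}. L2$i$k * L2$j$k)"
        using less by (intro sum.cong) auto
      ultimately show ?thesis
        by (simp add: sum_UNIV_eq_sum_lessThan_plus[of j] lo1 lo2)
    qed
    have "L1$j$j = L2$j$j"
      using col[of j] p1[of j] p2[of j]
      by (metis less_le power2_eq_iff_nonneg power2_eq_square)
    then show ?case using col p1 by (metis mult_right_cancel less_irrefl)
  qed
  then show ?thesis by (simp add: vec_eq_iff)
qed

text \<open>The vector \<open>u\<close> is \<open>e\<^sub>j\<close> minus the solution of the leading principal
  \<open>j \<times> j\<close> system, embedded into an invertible matrix so as to stay in \<open>n\<close> dimensions.\<close>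
lemma spd_conjugate_unit_vector:
  fixes A :: "real^('n::{finite,wellorder})^('n::{finite,wellorder})"
  assumes "spd A"
  obtains u where "u $ j = 1" "\<And>i. j < i \<Longrightarrow> u $ i = 0" "\<And>i. i < j \<Longrightarrow> (A *v u) $ i = 0"
proof -
  define P where "P = (diag_mat (\<lambda>i. if i < j then 1 else 0) :: real^_^_)"
  have Pv: "(P *v x) $ i = (if i < j then x $ i else 0)" for x i
    by (simp add: P_def diag_mat_mult_vec)
  define M where "M = P ** A ** P + (mat 1 - P)"
  have Mv: "(M *v x) $ i = (if i < j then (A *v (P *v x)) $ i else x $ i)" for x i
    by (simp add: M_def matrix_vector_mult_add_rdistrib matrix_vector_mult_diff_rdistrib Pv
        flip: matrix_vector_mul_assoc)
  have "x = 0" if Mx: "M *v x = 0" for x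
  proof -
    have xz: "x $ i = 0" if "\<not> i < j" for i
      using arg_cong[OF Mx, of "\<lambda>v. v $ i"] that by (simp add: Mv)
    then have "P *v x = x" by (simp add: vec_eq_iff Pv)
    then have Az: "(A *v x) $ i = 0" if "i < j" for i
      using arg_cong[OF Mx, of "\<lambda>v. v $ i"] that by (simp add: Mv)
    have "x \<bullet> (A *v x) = 0"
      unfolding inner_vec_def inner_real_def
      by (rule sum.neutral) (metis Az xz mult_zero_left mult_zero_right)
    then show "x = 0" using assms unfolding spd_def by (metis less_irrefl)
  qed
  then obtain B where "B ** M = mat 1" using matrix_left_invertible_ker by blast
  then have MB: "M ** B = mat 1" using matrix_left_right_inverse by blast
  define x where "x = B *v (P *v (A *v axis j 1))"
  have Mx: "M *v x = P *v (A *v axis j 1)"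
    unfolding x_def matrix_vector_mul_assoc[of M B] MB by simp
  have xz: "x $ i = 0" if "\<not> i < j" for i
    using arg_cong[OF Mx, of "\<lambda>v. v $ i"] that by (simp add: Mv Pv)
  then have "P *v x = x" by (simp add: vec_eq_iff Pv)
  then have Ax: "(A *v x) $ i = (A *v axis j 1) $ i" if "i < j" for i
    using arg_cong[OF Mx, of "\<lambda>v. v $ i"] that by (simp add: Mv Pv)
  show ?thesis
  proof
    show "(axis j 1 - x) $ j = 1" using xz[of j] by simp
    show "(axis j 1 - x) $ i = 0" if "j < i" for i using that xz by (simp add: axis_def)
    show "(A *v (axis j 1 - x)) $ i = 0" if "i < j" for i
      using Ax[OF that] by (simp add: matrix_vector_mult_diff_distrib)
  qed
qed

text \<open>Conjugacy: entry \<open>k\<close> of \<open>u\<^sub>i\<close> vanishes for \<open>k > i\<close> and entry \<open>k\<close> of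
  \<open>A u\<^sub>j\<close> for \<open>k < j\<close>, so for \<open>i \<le> j\<close> only \<open>k = j\<close> contributes; symmetry does the rest.\<close>
lemma conjugate_unit_vectors_inner:
  fixes A :: "real^('n::{finite,wellorder})^('n::{finite,wellorder})"
  assumes "transpose A = A"
    and U1: "\<And>j. U j $ j = 1" and U2: "\<And>i j. j < i \<Longrightarrow> U j $ i = 0"
    and U3: "\<And>i j. i < j \<Longrightarrow> (A *v U j) $ i = 0"
  shows "U i \<bullet> (A *v U j) = (if i = j then (A *v U j) $ j else 0)"
proof -
  have upper: "U i \<bullet> (A *v U j) = (if i = j then (A *v U j) $ j else 0)" if "i \<le> j" for i j
  proof -
    have "U i \<bullet> (A *v U j) = (\<Sum>k\<in>{j}. U i $ k * (A *v U j) $ k)"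
      unfolding inner_vec_def inner_real_def using U2 U3 \<open>i \<le> j\<close>
      by (intro sum.mono_neutral_right) (auto simp: neq_iff intro: le_less_trans)
    then show ?thesis using U1 U2 \<open>i \<le> j\<close> by (auto simp: le_less)
  qed
  have "U i \<bullet> (A *v U j) = U j \<bullet> (A *v U i)"
    by (metis assms(1) dot_lmul_matrix inner_commute transpose_matrix_vector)
  then show ?thesis using upper[of i j] upper[of j i] by (cases "i \<le> j") auto
qed

text \<open>With \<open>U\<close> the matrix of columns \<open>u\<^sub>j\<close>, \<open>U\<^sup>T A U = D\<close> is diagonal, so
  \<open>L = A U D\<^sup>-\<^sup>1\<^sup>/\<^sup>2\<close> satisfies \<open>L L\<^sup>T = A U D\<^sup>-\<^sup>1 U\<^sup>T A = A\<close>; it is lower triangular because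
  \<open>(A u\<^sub>j)\<^sub>i = 0\<close> for \<open>i < j\<close>.\<close>
lemma cholesky_factor_exists:
  fixes A :: "real^('n::{finite,wellorder})^('n::{finite,wellorder})"
  assumes "spd A"
  obtains L where "cholesky_factor A L"
proof -
  have sym: "transpose A = A" using assms by (simp add: spd_def)
  have "\<forall>j. \<exists>u. u $ j = 1 \<and> (\<forall>i. j < i \<longrightarrow> u $ i = 0) \<and> (\<forall>i. i < j \<longrightarrow> (A *v u) $ i = 0)"
    using spd_conjugate_unit_vector[OF assms] by blast
  then obtain U where U: "\<forall>j. U j $ j = 1 \<and> (\<forall>i. j < i \<longrightarrow> U j $ i = 0)
      \<and> (\<forall>i. i < j \<longrightarrow> (A *v U j) $ i = 0)"
    by (rule choice[THEN exE])
  define D where "D j = (A *v U j) $ j" for j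
  have inner: "U i \<bullet> (A *v U j) = (if i = j then D j else 0)" for i j
    unfolding D_def using U by (intro conjugate_unit_vectors_inner sym) auto
  have Dpos: "0 < D j" for j
  proof -
    have "U j \<noteq> 0" using U by (metis zero_index zero_neq_one)
    then show ?thesis using assms inner[of j j] unfolding spd_def by auto
  qed
  define Um where "Um = (\<chi> i j. U j $ i)"
  define K where "K = A ** Um"
  have K: "K $ i $ j = (A *v U j) $ i" for i j
    by (simp add: K_def Um_def matrix_matrix_mult_def matrix_vector_mult_def)
  have "(transpose Um ** K) $ i $ j = U i \<bullet> (A *v U j)" for i j
    by (simp add: matrix_matrix_mult_def transpose_def K Um_def inner_vec_def inner_real_def)
  then have "transpose Um ** K = diag_mat D"
    by (simp add: vec_eq_iff inner diag_mat_def)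
  then have "transpose Um ** (K ** diag_mat (\<lambda>j. 1 / D j)) = mat 1"
    using Dpos by (simp add: matrix_mul_assoc diag_mat_mult less_imp_neq[symmetric] diag_mat_one)
  then have inv: "K ** diag_mat (\<lambda>j. 1 / D j) ** transpose Um = mat 1"
    using matrix_left_right_inverse by blast
  define L where "L = K ** diag_mat (\<lambda>j. 1 / sqrt (D j))"
  have L: "L $ i $ j = (A *v U j) $ i / sqrt (D j)" for i j
    by (simp add: L_def matrix_mult_diag_mat K)
  have sqrt_sq: "diag_mat (\<lambda>j. 1 / sqrt (D j)) ** diag_mat (\<lambda>j. 1 / sqrt (D j))
      = diag_mat (\<lambda>j. 1 / D j)"
    using Dpos by (simp add: diag_mat_mult less_imp_le flip: real_sqrt_mult)
  have "L ** transpose L = K ** diag_mat (\<lambda>j. 1 / D j) ** transpose K"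
    by (metis L_def sqrt_sq matrix_mul_assoc matrix_transpose_mul transpose_diag_mat)
  also have "\<dots> = K ** diag_mat (\<lambda>j. 1 / D j) ** transpose Um ** A"
    by (simp add: K_def matrix_transpose_mul sym matrix_mul_assoc)
  also have "\<dots> = A" by (simp add: inv)
  finally have "L ** transpose L = A" .
  moreover have "0 < L $ i $ i" for i
    using Dpos[of i] by (simp add: L D_def[symmetric])
  ultimately have "cholesky_factor A L"
    by (simp add: cholesky_factor_def L U)
  then show ?thesis ..
qed

lemma cholesky_factor_cholesky:
  assumes "spd A"
  shows "cholesky_factor A (cholesky A)"
proof -
  obtain L where "cholesky_factor A L" using cholesky_factor_exists[OF assms] .
  then show ?thesis unfolding cholesky_eq_The by (metis cholesky_factor_unique theI)
qed

lemma cholesky_noninvertible: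
  fixes A B :: "real^('n::{finite,wellorder})^('n::{finite,wellorder})"
  assumes "\<not> invertible A" "\<not> invertible B"
  shows "cholesky A = cholesky B"
  unfolding cholesky_eq_The
  by (intro arg_cong[where f = The] ext) (use assms cholesky_factor_invertible(2) in blast)

section \<open>Empirical covariance and preconditioning\<close>

lemma matrix_inv_unique:
  fixes A B :: "'a::field^'n^'n"
  assumes "A ** B = mat 1"
  shows "matrix_inv A = B"
proof -
  have BA: "B ** A = mat 1" using assms matrix_left_right_inverse by blast
  have "A ** matrix_inv A = mat 1 \<and> matrix_inv A ** A = mat 1"
    unfolding matrix_inv_def by (rule someI[of _ B]) (simp add: assms BA)
  then have "matrix_inv A = matrix_inv A ** (A ** B)" by (simp add: assms)
  also have "\<dots> = B" by (simp add: matrix_mul_assoc \<open>_ \<and> _\<close>)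
  finally show ?thesis .
qed

lemma matrix_inv_noninvertible:
  assumes "\<not> invertible A" "\<not> invertible B"
  shows "matrix_inv A = matrix_inv B"
  using assms unfolding matrix_inv_def invertible_def by metis

lemma cholesky_congruence_noninvertible:
  fixes F :: "real^('n::{finite,wellorder})^('n::{finite,wellorder})"
  assumes "\<not> invertible A" "\<not> invertible B"
  shows "cholesky (F ** A ** transpose F) = cholesky (F ** B ** transpose F)"
  using assms by (intro cholesky_noninvertible) (simp_all add: invertible_det_nz det_mul)

lemma outer_mult_vec: "outer v *v z = (v \<bullet> z) *\<^sub>R v"
  by (simp add: vec_eq_iff outer_def matrix_vector_mult_def inner_vec_def sum_distrib_left
      ac_simps)

lemma emp_cov_mult_vec: "emp_cov S Y *v z = (1 / real S) *\<^sub>R (\<Sum>s<S. (Y s \<bullet> z) *\<^sub>R Y s)"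
proof -
  have "(\<Sum>s<S. outer (Y s)) *v z = (\<Sum>s<S. outer (Y s) *v z)"
    by (induct S) (simp_all add: matrix_vector_mult_add_rdistrib)
  then show ?thesis
    by (simp add: emp_cov_def outer_mult_vec flip: scaleR_matrix_vector_assoc)
qed

lemma emp_cov_component: "emp_cov S Y $ i $ j = (1 / real S) * (\<Sum>s<S. Y s $ i * Y s $ j)"
  by (simp add: emp_cov_def outer_def sum_component)

lemma transpose_emp_cov: "transpose (emp_cov S Y) = emp_cov S Y"
  by (simp add: vec_eq_iff transpose_def emp_cov_component mult.commute)

lemma inner_emp_cov: "z \<bullet> (emp_cov S Y *v z) = (1 / real S) * (\<Sum>s<S. (Y s \<bullet> z)\<^sup>2)"
  by (simp add: emp_cov_mult_vec inner_sum_right power2_eq_square inner_commute)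

lemma emp_cov_restrict: "emp_cov S (\<lambda>s\<in>{..<S}. Y s) = emp_cov S Y"
  unfolding emp_cov_def by (intro arg_cong[where f = "(*\<^sub>R) _"] sum.cong) auto

lemma emp_cov_linear_image:
  fixes F :: "real^'n^'m"
  shows "emp_cov S (\<lambda>s. F *v Y s) = F ** emp_cov S Y ** transpose F"
proof (rule matrix_eq[THEN iffD2], intro allI)
  fix z
  have "Y s \<bullet> (transpose F *v z) = (F *v Y s) \<bullet> z" for s
    by (metis dot_lmul_matrix vector_transpose_matrix)
  then show "emp_cov S (\<lambda>s. F *v Y s) *v z = (F ** emp_cov S Y ** transpose F) *v z"
    by (simp add: emp_cov_mult_vec matrix_vector_mult_scaleR linear_sum[OF matrix_vector_mul_linear]
        flip: matrix_vector_mul_assoc)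
qed

lemma spd_emp_cov:
  fixes Y :: "nat \<Rightarrow> real^'n"
  assumes "invertible (emp_cov S Y)"
  shows "spd (emp_cov S Y)"
  unfolding spd_def
proof (intro conjI allI impI transpose_emp_cov)
  fix x :: "real^'n" assume "x \<noteq> 0"
  obtain B where B: "B ** emp_cov S Y = mat 1" using assms invertible_left_inverse by blast
  have "x \<bullet> (emp_cov S Y *v x) \<noteq> 0"
  proof
    assume "x \<bullet> (emp_cov S Y *v x) = 0"
    then have "(\<Sum>s<S. (Y s \<bullet> x)\<^sup>2) = 0 \<or> S = 0"
      by (simp add: inner_emp_cov)
    then have "(\<forall>s\<in>{..<S}. Y s \<bullet> x = 0) \<or> S = 0"
      by (simp add: sum_nonneg_eq_0_iff)
    then have "emp_cov S Y *v x = 0" by (auto simp: emp_cov_mult_vec)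
    then have "x = B *v 0" by (metis B matrix_vector_mul_assoc matrix_vector_mul_lid)
    then show False using \<open>x \<noteq> 0\<close> by simp
  qed
  moreover have "0 \<le> x \<bullet> (emp_cov S Y *v x)" by (simp add: inner_emp_cov sum_nonneg)
  ultimately show "0 < x \<bullet> (emp_cov S Y *v x)" by linarith
qed

lemma spd_congruence:
  fixes F :: "real^'n^'n"
  assumes "spd A" "invertible F"
  shows "spd (F ** A ** transpose F)"
  unfolding spd_def
proof (intro conjI allI impI)
  show "transpose (F ** A ** transpose F) = F ** A ** transpose F"
    using assms(1) by (simp add: spd_def matrix_transpose_mul matrix_mul_assoc)
  fix x :: "real^'n" assume "x \<noteq> 0"
  obtain G where "G ** transpose F = mat 1"
    using transpose_invertible[OF assms(2)] invertible_left_inverse by blast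
  then have "x = G *v (transpose F *v x)"
    by (metis matrix_vector_mul_assoc matrix_vector_mul_lid)
  then have "transpose F *v x \<noteq> 0" using \<open>x \<noteq> 0\<close> by auto
  then have "0 < (transpose F *v x) \<bullet> (A *v (transpose F *v x))"
    using assms(1) unfolding spd_def by blast
  also have "\<dots> = x \<bullet> ((F ** A ** transpose F) *v x)"
    by (metis dot_lmul_matrix matrix_vector_mul_assoc transpose_matrix_vector)
  finally show "0 < x \<bullet> ((F ** A ** transpose F) *v x)" .
qed

lemma kappa_precond_cholesky_congruence:
  fixes F Y :: "real^('n::{finite,wellorder})^('n::{finite,wellorder})"
  assumes "spd Y" "invertible F"
  shows "kappa (precond (cholesky (F ** Y ** transpose F)) (F ** transpose F))
       = kappa (matrix_inv Y)"
proof -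
  define L where "L = cholesky (F ** Y ** transpose F)"
  have L: "cholesky_factor (F ** Y ** transpose F) L"
    unfolding L_def by (rule cholesky_factor_cholesky[OF spd_congruence[OF assms]])
  obtain L' where LL': "L ** L' = mat 1"
    using cholesky_factor_invertible(1)[OF L] invertible_right_inverse by blast
  then have L'L: "L' ** L = mat 1" using matrix_left_right_inverse by blast
  then have "invertible L'" using LL' invertible_def by blast
  define M where "M = L' ** F"
  have "invertible M" unfolding M_def by (rule invertible_mult) fact+
  then obtain M' where M'M: "M' ** M = mat 1" using invertible_left_inverse by blast
  have "precond L (F ** transpose F) = M ** transpose M"
    by (simp add: precond_def matrix_inv_unique[OF LL'] M_def matrix_transpose_mul
        matrix_mul_assoc)
  moreover have "Y ** (transpose M ** M) = mat 1"
  proof -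
    have TT: "transpose L ** transpose L' = mat 1"
      by (metis L'L matrix_transpose_mul transpose_mat)
    have "M ** Y ** transpose M = L' ** (L ** transpose L) ** transpose L'"
      using L by (simp add: cholesky_factor_def M_def matrix_transpose_mul matrix_mul_assoc)
    also have "\<dots> = mat 1" by (simp add: matrix_mul_assoc L'L TT)
    finally have MYM: "M ** Y ** transpose M = mat 1" .
    have "Y ** (transpose M ** M) = M' ** (M ** Y ** transpose M) ** M"
      by (simp add: matrix_mul_assoc M'M)
    also have "\<dots> = mat 1" by (simp add: MYM M'M)
    finally show ?thesis .
  qed
  ultimately show ?thesis
    using kappa_mult_commute[OF \<open>invertible M\<close>]
    by (simp add: L_def matrix_inv_unique)
qed

section \<open>Linear images of Gaussian samples\<close>

lemma measurable_matrix_vector_mult [measurable]: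
  "(\<lambda>x. (F::real^'m^'n) *v x) \<in> borel_measurable borel"
  by (intro borel_measurable_continuous_onI linear_continuous_on matrix_vector_mul_bounded_linear)

text \<open>Both sides are compared on boxes: the preimage of a box under \<open>x \<mapsto> F x\<close> is
  the image of the box under \<open>F\<^sup>-\<^sup>1\<close>, whose volume scales by \<open>|det F\<^sup>-\<^sup>1|\<close>.\<close>
lemma lborel_eq_density_distr_linear:
  fixes F G :: "real^('n::{finite,wellorder})^('n::{finite,wellorder})"
  assumes FG: "F ** G = mat 1"
  shows "lborel = density (distr lborel borel (\<lambda>x. F *v x)) (\<lambda>_. ennreal \<bar>det F\<bar>)"
proof (rule lborel_eqI)
  have GF: "G ** F = mat 1" using FG matrix_left_right_inverse by blast
  have detG: "\<bar>det F\<bar> * \<bar>det G\<bar> = 1"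
    using arg_cong[OF FG, of det] by (simp add: det_mul flip: abs_mult)
  fix l u :: "(real, 'n) vec" assume le: "\<And>b. b \<in> Basis \<Longrightarrow> l \<bullet> b \<le> u \<bullet> b"
  have pre: "(\<lambda>x. F *v x) -` box l u = (\<lambda>x. G *v x) ` box l u"
  proof (intro set_eqI iffI)
    fix x assume "x \<in> (\<lambda>x. F *v x) -` box l u"
    then show "x \<in> (\<lambda>x. G *v x) ` box l u"
      by (intro image_eqI[of _ _ "F *v x"]) (simp_all add: matrix_vector_mul_assoc GF)
  qed (auto simp: matrix_vector_mul_assoc FG)
  have "(\<lambda>x. G *v x) ` box l u \<in> sets borel"
    unfolding pre[symmetric]
    by (rule measurable_sets_borel[OF measurable_matrix_vector_mult]) simp
  then have "emeasure lborel ((\<lambda>x. F *v x) -` box l u)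
      = emeasure lebesgue ((\<lambda>x. G *v x) ` box l u)"
    by (simp add: pre)
  also have "\<dots> = ennreal (measure lebesgue ((\<lambda>x. G *v x) ` box l u))"
    by (intro emeasure_eq_measure2 measurable_linear_image) (auto intro: matrix_vector_mul_linear)
  also have "\<dots> = ennreal (\<bar>det G\<bar> * measure lborel (box l u))"
    using measure_linear_image[of "\<lambda>x. G *v x" "box l u"]
    by (simp add: matrix_vector_mul_linear matrix_of_matrix_vector_mul)
  finally have "emeasure lborel ((\<lambda>x. F *v x) -` box l u)
      = ennreal (\<bar>det G\<bar> * measure lborel (box l u))" .
  then have "emeasure (density (distr lborel borel (\<lambda>x. F *v x)) (\<lambda>_. ennreal \<bar>det F\<bar>)) (box l u)
      = ennreal (measure lborel (box l u))"
    by (simp add: emeasure_density_const emeasure_distr detG mult.assoc[symmetric]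
        flip: ennreal_mult')
  also have "\<dots> = (\<Prod>b\<in>Basis. (u - l) \<bullet> b)"
    using le by (simp add: measure_lborel_box_eq)
  finally show "emeasure (density (distr lborel borel (\<lambda>x. F *v x)) (\<lambda>_. ennreal \<bar>det F\<bar>))
    (box l u) = (\<Prod>b\<in>Basis. (u - l) \<bullet> b)" .
qed simp

lemma lborel_linear_image:
  fixes F :: "real^('n::{finite,wellorder})^('n::{finite,wellorder})"
  assumes "invertible F"
  shows "distr lborel borel (\<lambda>x. F *v x) = density lborel (\<lambda>_. ennreal (1 / \<bar>det F\<bar>))"
proof -
  obtain G where FG: "F ** G = mat 1" using assms invertible_right_inverse by blast
  have "det F \<noteq> 0" using assms by (simp add: invertible_det_nz)
  have "density lborel (\<lambda>_. ennreal (1 / \<bar>det F\<bar>))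
      = density (density (distr lborel borel (\<lambda>x. F *v x)) (\<lambda>_. ennreal \<bar>det F\<bar>))
          (\<lambda>_. ennreal (1 / \<bar>det F\<bar>))"
    by (rule arg_cong[where f = "\<lambda>M. density M _", OF lborel_eq_density_distr_linear[OF FG]])
  also have "\<dots> = density (distr lborel borel (\<lambda>x. F *v x))
      (\<lambda>_. ennreal \<bar>det F\<bar> * ennreal (1 / \<bar>det F\<bar>))"
    by (rule density_density_eq) auto
  also have "(\<lambda>_::(real, 'n) vec. ennreal \<bar>det F\<bar> * ennreal (1 / \<bar>det F\<bar>)) = (\<lambda>_. 1)"
    using \<open>det F \<noteq> 0\<close> by (auto simp flip: ennreal_mult')
  finally show ?thesis by (simp add: density_1)
qed

lemma borel_measurable_gaussian_density [measurable]:
  "(\<lambda>x. gaussian_density C x) \<in> borel_measurable borel"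
  unfolding gaussian_density_def by measurable

lemma sets_gaussian [simp, measurable_cong]: "sets (gaussian C) = sets borel"
  by (simp add: gaussian_def)

lemma sigma_finite_gaussian: "sigma_finite_measure (gaussian C)"
  unfolding gaussian_def
  by (subst sigma_finite_measure.sigma_finite_iff_density_finite[OF lborel.sigma_finite_measure_axioms])
    auto

lemma gaussian_density_congruence:
  fixes F G :: "real^('n::{finite,wellorder})^('n::{finite,wellorder})"
  assumes FG: "F ** G = mat 1"
  shows "gaussian_density (F ** transpose F) z = gaussian_density (mat 1) (G *v z) / \<bar>det F\<bar>"
proof -
  have GF: "G ** F = mat 1" using FG matrix_left_right_inverse by blast
  have "det F \<noteq> 0" using arg_cong[OF FG, of det] by (auto simp: det_mul)
  have "(F ** transpose F) ** (transpose G ** G) = mat 1"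
    by (metis FG GF matrix_mul_assoc matrix_mul_rid matrix_transpose_mul transpose_mat)
  then have "z \<bullet> (matrix_inv (F ** transpose F) *v z) = (G *v z) \<bullet> (G *v z)"
    by (simp add: matrix_inv_unique inner_commute flip: matrix_vector_mul_assoc dot_lmul_matrix)
  moreover have "det (F ** transpose F) powr (- 1 / 2) = 1 / \<bar>det F\<bar>"
  proof -
    have "det (F ** transpose F) = \<bar>det F\<bar> powr 2"
      using \<open>det F \<noteq> 0\<close> by (simp add: det_mul powr_numeral power2_eq_square)
    then show ?thesis
      using \<open>det F \<noteq> 0\<close> by (simp add: powr_powr powr_minus_divide)
  qed
  moreover have "matrix_inv (mat 1 :: ((real, 'n) vec, 'n) vec) = mat 1" by (simp add: matrix_inv_unique)
  ultimately show ?thesis by (simp add: gaussian_density_def)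
qed

lemma gaussian_linear_image:
  fixes F :: "real^('n::{finite,wellorder})^('n::{finite,wellorder})"
  assumes "invertible F"
  shows "distr (gaussian (mat 1)) borel (\<lambda>x. F *v x) = gaussian (F ** transpose F)"
proof -
  obtain G where FG: "F ** G = mat 1" and GF: "G ** F = mat 1"
    using assms invertible_def by blast
  let ?h = "\<lambda>z. ennreal (gaussian_density (mat 1) (G *v z))"
  have "distr (gaussian (mat 1)) borel (\<lambda>x. F *v x)
      = distr (density lborel (\<lambda>x. ?h (F *v x))) borel (\<lambda>x. F *v x)"
    unfolding gaussian_def by (simp add: matrix_vector_mul_assoc GF)
  also have "\<dots> = density (distr lborel borel (\<lambda>x. F *v x)) ?h"
    by (rule density_distr[symmetric]) measurable
  also have "\<dots> = density lborel (\<lambda>z. ennreal (1 / \<bar>det F\<bar>) * ?h z)"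
    unfolding lborel_linear_image[OF assms] by (rule density_density_eq) measurable
  also have "\<dots> = gaussian (F ** transpose F)"
    unfolding gaussian_def gaussian_density_congruence[OF FG]
    by (simp add: ennreal_mult'[symmetric])
  finally show ?thesis .
qed

lemma distr_PiM_componentwise:
  fixes I :: "'i set"
  assumes "sigma_finite_measure M" "sigma_finite_measure N" "finite I"
    and T: "T \<in> measurable M N" and TN: "distr M N T = N"
  shows "distr (PiM I (\<lambda>_. M)) (PiM I (\<lambda>_. N)) (\<lambda>x. \<lambda>i\<in>I. T (x i)) = PiM I (\<lambda>_. N)"
proof -
  interpret M: product_sigma_finite "\<lambda>_::'i. M"
    using assms(1) by (simp add: product_sigma_finite_def)
  interpret N: product_sigma_finite "\<lambda>_::'i. N"
    using assms(2) by (simp add: product_sigma_finite_def)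
  have TI: "(\<lambda>x. \<lambda>i\<in>I. T (x i)) \<in> measurable (PiM I (\<lambda>_. M)) (PiM I (\<lambda>_. N))"
    by (intro measurable_restrict measurable_compose[OF _ T] measurable_component_singleton)
  show ?thesis
  proof (rule N.PiM_eqI)
    fix A assume A: "\<And>i. i \<in> I \<Longrightarrow> A i \<in> sets N"
    have "(\<lambda>x. \<lambda>i\<in>I. T (x i)) -` PiE I A \<inter> space (PiM I (\<lambda>_. M))
        = PiE I (\<lambda>i. T -` A i \<inter> space M)"
      by (auto simp: space_PiM PiE_iff)
    then have "emeasure (distr (PiM I (\<lambda>_. M)) (PiM I (\<lambda>_. N)) (\<lambda>x. \<lambda>i\<in>I. T (x i))) (PiE I A)
        = emeasure (PiM I (\<lambda>_. M)) (PiE I (\<lambda>i. T -` A i \<inter> space M))"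
      using TI A assms(3) by (simp add: emeasure_distr sets_PiM_I_finite)
    also have "\<dots> = (\<Prod>i\<in>I. emeasure M (T -` A i \<inter> space M))"
      using A T assms(3) by (intro M.emeasure_PiM) auto
    also have "\<dots> = (\<Prod>i\<in>I. emeasure N (A i))"
    proof (rule prod.cong[OF refl])
      fix i assume "i \<in> I"
      then have "emeasure (distr M N T) (A i) = emeasure M (T -` A i \<inter> space M)"
        using A T by (simp add: emeasure_distr)
      then show "emeasure M (T -` A i \<inter> space M) = emeasure N (A i)" by (simp add: TN)
    qed
    finally show "emeasure (distr (PiM I (\<lambda>_. M)) (PiM I (\<lambda>_. N)) (\<lambda>x. \<lambda>i\<in>I. T (x i))) (PiE I A)
        = (\<Prod>i\<in>I. emeasure N (A i))" .
  qed (simp_all add: assms(3))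
qed

text \<open>No measurability of \<open>f\<close> is needed: a set and its preimage under the bimeasurable
  bijection \<open>T\<close> are measurable together, and non-measurable sets have measure \<open>0\<close>.\<close>
lemma distr_measure_preserving_bij:
  assumes T: "T \<in> measurable M N" and T': "T' \<in> measurable N M"
    and T'T: "\<And>x. x \<in> space M \<Longrightarrow> T' (T x) = x" and TT': "\<And>y. y \<in> space N \<Longrightarrow> T (T' y) = y"
    and TN: "distr M N T = N"
  shows "distr N K f = distr M K (\<lambda>x. f (T x))"
  unfolding distr_def
proof (intro arg_cong[where f = "measure_of _ _"] ext)
  fix A
  define B where "B = (\<lambda>x. f (T x)) -` A \<inter> space M"
  have pre: "f -` A \<inter> space N = T' -` B \<inter> space N"
    using TT' measurable_space[OF T'] by (auto simp: B_def)
  have B: "B = T -` (T' -` B \<inter> space N) \<inter> space M"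
    using T'T measurable_space[OF T] by (auto simp: B_def)
  show "emeasure N (f -` A \<inter> space N) = emeasure M B"
  proof (cases "B \<in> sets M")
    case True
    then have "T' -` B \<inter> space N \<in> sets N" using T' by (rule measurable_sets[rotated])
    then have "emeasure (distr M N T) (T' -` B \<inter> space N) = emeasure M B"
      using T by (subst B) (simp add: emeasure_distr)
    then show ?thesis by (simp add: pre TN)
  next
    case False
    then have "T' -` B \<inter> space N \<notin> sets N"
      using B measurable_sets[OF T] by metis
    then show ?thesis using False by (simp add: pre emeasure_notin_sets)
  qed
qed

lemma iid_sample_linear_change:
  fixes F :: "real^('n::{finite,wellorder})^('n::{finite,wellorder})"
  assumes "invertible F"
  shows "distr (iid_sample S (F ** transpose F)) K f
       = distr (iid_sample S (mat 1)) K (\<lambda>Y. f (\<lambda>s\<in>{..<S}. F *v Y s))"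
proof -
  obtain G where FG: "F ** G = mat 1" and GF: "G ** F = mat 1"
    using assms invertible_def by blast
  have meas: "(\<lambda>Y. \<lambda>s\<in>{..<S}. H *v Y s) \<in> measurable (iid_sample S A) (iid_sample S B)"
    for H A B :: "((real, 'n) vec, 'n) vec"
    unfolding iid_sample_def
  proof (rule measurable_restrict)
    fix s assume "s \<in> {..<S}"
    from measurable_component_singleton[OF this, of "\<lambda>_. gaussian A"]
    show "(\<lambda>Y. H *v Y s) \<in> measurable (PiM {..<S} (\<lambda>_. gaussian A)) (gaussian B)"
      by (simp only: measurable_cong_sets[OF refl sets_gaussian])
        (rule measurable_compose[OF _ measurable_matrix_vector_mult])
  qed
  have inverse: "(\<lambda>s\<in>{..<S}. H *v (\<lambda>s\<in>{..<S}. H' *v Y s) s) = Y"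
    if "H ** H' = mat 1" "Y \<in> space (iid_sample S A)" for H H' A :: "((real, 'n) vec, 'n) vec" and Y
    using that by (auto simp: iid_sample_def space_PiM PiE_def extensional_def
        matrix_vector_mul_assoc fun_eq_iff)
  have "distr (iid_sample S (mat 1)) (iid_sample S (F ** transpose F)) (\<lambda>Y. \<lambda>s\<in>{..<S}. F *v Y s)
      = iid_sample S (F ** transpose F)"
    unfolding iid_sample_def
  proof (rule distr_PiM_componentwise[OF sigma_finite_gaussian sigma_finite_gaussian])
    show "distr (gaussian (mat 1)) (gaussian (F ** transpose F)) (\<lambda>x. F *v x)
        = gaussian (F ** transpose F)"
      by (subst gaussian_linear_image[OF assms, symmetric]) (rule distr_cong, simp_all)
  qed (simp_all add: measurable_cong_sets[OF sets_gaussian sets_gaussian])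
  then show ?thesis
    by (intro distr_measure_preserving_bij[where T' = "\<lambda>Y. \<lambda>s\<in>{..<S}. G *v Y s"]
        meas inverse[OF GF] inverse[OF FG])
qed

section \<open>Singular empirical covariance is a null event\<close>

lemma borel_measurable_det:
  fixes A :: "'a \<Rightarrow> real^'n^'n"
  assumes "\<And>i j. (\<lambda>x. A x $ i $ j) \<in> borel_measurable M"
  shows "(\<lambda>x. det (A x)) \<in> borel_measurable M"
  unfolding det_def
  by (intro borel_measurable_sum borel_measurable_times borel_measurable_const
      borel_measurable_prod assms)

lemma null_sets_gaussian_subspace:
  fixes V :: "(real^'n) set"
  assumes "subspace V" "V \<noteq> UNIV"
  shows "V \<in> null_sets (gaussian C)"
proof -
  have "dim V \<noteq> DIM(real^'n)"
    using assms by (metis dim_eq_full span_eq_iff)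
  then have "dim V < DIM(real^'n)" using dim_subset_UNIV[of V] by simp
  then have "V \<in> null_sets lebesgue"
    by (simp add: negligible_lowdim flip: negligible_iff_null_sets)
  moreover have V: "V \<in> sets borel" by (intro borel_closed closed_subspace assms(1))
  ultimately have "V \<in> null_sets lborel" by (simp add: null_sets_completion_iff)
  then show ?thesis
    unfolding gaussian_def
    by (subst null_sets_density_iff) (use V AE_not_in[OF \<open>V \<in> null_sets lborel\<close>] in
        \<open>auto elim: AE_mp\<close>)
qed

text \<open>The singular set of the first \<open>N\<close> samples is controlled by substituting their rows
  into the identity matrix one at a time.\<close>
definition rows_or_axes :: "'n set \<Rightarrow> ('n \<Rightarrow> real^'n) \<Rightarrow> real^'n^'n" where
  "rows_or_axes K w = (\<chi> j. if j \<in> K then w j else axis j 1)"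

lemma rows_or_axes_empty: "rows_or_axes {} w = mat 1"
  by (simp add: rows_or_axes_def vec_eq_iff axis_def mat_def)

text \<open>The determinant is a linear function of row \<open>k\<close>, and it does not vanish at \<open>e\<^sub>k\<close>.\<close>
lemma det_rows_or_axes_insert_hyperplane:
  assumes "k \<notin> K" "det (rows_or_axes K w) \<noteq> 0"
  shows "subspace {y. det (rows_or_axes (insert k K) (w(k := y))) = 0}"
    and "{y. det (rows_or_axes (insert k K) (w(k := y))) = 0} \<noteq> UNIV"
proof -
  define R where "R = rows_or_axes K w"
  have row: "rows_or_axes (insert k K) (w(k := y)) = (\<chi> j. if j = k then y else R $ j)" for y
    using assms(1) by (auto simp: vec_eq_iff rows_or_axes_def R_def)
  have add: "det (\<chi> j. if j = k then x + y else R $ j)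
      = det (\<chi> j. if j = k then x else R $ j) + det (\<chi> j. if j = k then y else R $ j)" for x y
    using det_row_add[of k "\<lambda>_. x" "\<lambda>_. y" "\<lambda>j. R $ j"] by simp
  have scale: "det (\<chi> j. if j = k then c *\<^sub>R x else R $ j)
      = c * det (\<chi> j. if j = k then x else R $ j)" for c x
    using det_row_mul[of k c "\<lambda>_. x" "\<lambda>j. R $ j", unfolded scalar_mult_eq_scaleR] .
  show "subspace {y. det (rows_or_axes (insert k K) (w(k := y))) = 0}"
    unfolding subspace_def row by (simp add: add scale det_row_0)
  have "rows_or_axes (insert k K) (w(k := axis k 1)) = R"
    using assms(1) by (auto simp: vec_eq_iff rows_or_axes_def R_def)
  then have "axis k 1 \<notin> {y. det (rows_or_axes (insert k K) (w(k := y))) = 0}"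
    using assms(2) by (simp add: R_def)
  then show "{y. det (rows_or_axes (insert k K) (w(k := y))) = 0} \<noteq> UNIV" by blast
qed

lemma measurable_det_rows_or_axes:
  assumes "e ` K \<subseteq> I"
  shows "(\<lambda>Y. det (rows_or_axes K (\<lambda>j. Y (e j)))) \<in> borel_measurable (PiM I (\<lambda>_. gaussian C))"
proof (rule borel_measurable_det)
  fix j l
  show "(\<lambda>Y. rows_or_axes K (\<lambda>j. Y (e j)) $ j $ l) \<in> borel_measurable (PiM I (\<lambda>_. gaussian C))"
  proof (cases "j \<in> K")
    case True
    then have "e j \<in> I" using assms by auto
    then have "(\<lambda>Y. Y (e j)) \<in> borel_measurable (PiM I (\<lambda>_. gaussian C))"
      using measurable_component_singleton[of "e j" I "\<lambda>_. gaussian C"]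
      by (simp only: measurable_cong_sets[OF refl sets_gaussian])
    with True show ?thesis
      by (simp add: rows_or_axes_def measurable_compose[OF _ borel_measurable_nth])
  qed (simp add: rows_or_axes_def)
qed

lemma (in product_sigma_finite) null_sets_PiM_insert:
  assumes I: "finite I" "i \<notin> I" and Z: "Z \<in> sets (PiM (insert i I) M)"
    and Z': "Z' \<in> null_sets (PiM I M)"
    and slice: "\<And>x. x \<in> space (PiM I M) - Z' \<Longrightarrow>
      \<exists>V \<in> null_sets (M i). \<forall>y. x(i := y) \<in> Z \<longrightarrow> y \<in> V"
  shows "Z \<in> null_sets (PiM (insert i I) M)"
proof -
  have bound: "(\<integral>\<^sup>+y. indicator Z (x(i := y)) \<partial>M i) \<le> \<infinity> * indicator Z' x"
    if "x \<in> space (PiM I M)" for x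
  proof (cases "x \<in> Z'")
    case False
    with that have "x \<in> space (PiM I M) - Z'" by simp
    from slice[OF this] obtain V where V: "V \<in> null_sets (M i)" "\<forall>y. x(i := y) \<in> Z \<longrightarrow> y \<in> V" ..
    have "indicator Z (x(i := y)) \<le> (indicator V y :: ennreal)" for y
      using V(2) by (cases "x(i := y) \<in> Z") auto
    then have "(\<integral>\<^sup>+y. indicator Z (x(i := y)) \<partial>M i) \<le> (\<integral>\<^sup>+y. indicator V y \<partial>M i)"
      by (rule nn_integral_mono)
    also have "\<dots> = 0"
      using V(1) by (subst nn_integral_indicator) (auto dest: null_setsD2 simp: null_setsD1)
    finally show ?thesis by simp
  qed simp
  have "emeasure (PiM (insert i I) M) Z = (\<integral>\<^sup>+x. indicator Z x \<partial>PiM (insert i I) M)"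
    using Z by simp
  also have "\<dots> = (\<integral>\<^sup>+x. (\<integral>\<^sup>+y. indicator Z (x(i := y)) \<partial>M i) \<partial>PiM I M)"
    using Z by (intro product_nn_integral_insert I borel_measurable_indicator)
  also have "\<dots> \<le> (\<integral>\<^sup>+x. \<infinity> * indicator Z' x \<partial>PiM I M)"
    by (rule nn_integral_mono) (rule bound)
  also have "\<dots> = \<infinity> * emeasure (PiM I M) Z'"
    using Z' by (intro nn_integral_cmult_indicator) auto
  also have "\<dots> = 0" using Z' by (simp add: null_setsD1)
  finally show ?thesis using Z by (simp add: null_sets_def)
qed

text \<open>Induction on \<open>K\<close>, integrating out the sample \<open>e k\<close> last: given the other samples
  with a nonsingular matrix, it has to fall into a hyperplane.\<close>
lemma null_sets_det_rows_or_axes: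
  fixes e :: "'n::finite \<Rightarrow> 'i" and C :: "((real, 'n) vec, 'n) vec"
  assumes "inj e" "finite I" "e ` K \<subseteq> I"
  shows "{Y \<in> space (PiM I (\<lambda>_. gaussian C)). det (rows_or_axes K (\<lambda>j. Y (e j))) = 0}
    \<in> null_sets (PiM I (\<lambda>_. gaussian C))"
  using finite[of K] assms(2,3)
proof (induction K arbitrary: I rule: finite_induct)
  case empty
  then show ?case by (simp add: rows_or_axes_empty)
next
  case (insert k K)
  interpret product_sigma_finite "\<lambda>_::'i. gaussian C"
    using sigma_finite_gaussian by (simp add: product_sigma_finite_def)
  define I' where "I' = I - {e k}"
  have I: "I = insert (e k) I'" "e k \<notin> I'" "finite I'" "e ` K \<subseteq> I'"
    using insert.prems \<open>inj e\<close> \<open>k \<notin> K\<close> by (auto simp: I'_def inj_eq)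
  show ?case
    unfolding I(1)
  proof (rule null_sets_PiM_insert[OF I(3,2)])
    show "{Y \<in> space (PiM (insert (e k) I') (\<lambda>_. gaussian C)).
        det (rows_or_axes (insert k K) (\<lambda>j. Y (e j))) = 0} \<in> sets (PiM (insert (e k) I') (\<lambda>_. gaussian C))"
      using measurable_det_rows_or_axes[OF insert.prems(2)[unfolded I(1)]]
      by (simp add: pred_def[symmetric] pred_eq_const1)
    show "{Y \<in> space (PiM I' (\<lambda>_. gaussian C)). det (rows_or_axes K (\<lambda>j. Y (e j))) = 0}
        \<in> null_sets (PiM I' (\<lambda>_. gaussian C))"
      using insert.IH I(3,4) .
    fix x assume "x \<in> space (PiM I' (\<lambda>_. gaussian C)) -
      {Y \<in> space (PiM I' (\<lambda>_. gaussian C)). det (rows_or_axes K (\<lambda>j. Y (e j))) = 0}"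
    then have "det (rows_or_axes K (\<lambda>j. x (e j))) \<noteq> 0" by simp
    then have V: "{y. det (rows_or_axes (insert k K) ((\<lambda>j. x (e j))(k := y))) = 0}
        \<in> null_sets (gaussian C)"
      using det_rows_or_axes_insert_hyperplane[OF \<open>k \<notin> K\<close>] by (intro null_sets_gaussian_subspace)
    have row: "(\<lambda>j. (x(e k := y)) (e j)) = (\<lambda>j. x (e j))(k := y)" for y
      using \<open>inj e\<close> by (auto simp: inj_eq)
    show "\<exists>V \<in> null_sets (gaussian C). \<forall>y. x(e k := y) \<in>
        {Y \<in> space (PiM (insert (e k) I') (\<lambda>_. gaussian C)).
          det (rows_or_axes (insert k K) (\<lambda>j. Y (e j))) = 0} \<longrightarrow> y \<in> V"
      using V by (rule bexI[rotated]) (simp add: row del: fun_upd_apply)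
  qed
qed

lemma borel_measurable_det_emp_cov:
  "(\<lambda>Y. det (emp_cov S Y)) \<in> borel_measurable (iid_sample S C)"
proof (rule borel_measurable_det)
  fix i j
  have "(\<lambda>Y. Y s) \<in> borel_measurable (iid_sample S C)" if "s \<in> {..<S}" for s
    using measurable_component_singleton[OF that, of "\<lambda>_. gaussian C"]
    by (simp only: iid_sample_def measurable_cong_sets[OF refl sets_gaussian])
  then show "(\<lambda>Y. emp_cov S Y $ i $ j) \<in> borel_measurable (iid_sample S C)"
    unfolding emp_cov_component
    by (intro borel_measurable_times borel_measurable_const borel_measurable_sum
        measurable_compose[OF _ borel_measurable_nth])
qed

lemma emp_cov_noninvertible_imp_det_rows_eq_0:
  assumes "\<not> invertible (emp_cov S Y)" "h ` UNIV \<subseteq> {..<S}"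
  shows "det (\<chi> j. Y (h j)) = 0"
proof -
  have "\<not> (\<forall>x. emp_cov S Y *v x = 0 \<longrightarrow> x = 0)"
    using assms(1) by (simp add: invertible_left_inverse flip: matrix_left_invertible_ker)
  then obtain v where "v \<noteq> 0" "emp_cov S Y *v v = 0" by blast
  then have "(\<Sum>s<S. (Y s \<bullet> v)\<^sup>2) = 0 \<or> S = 0"
    using inner_emp_cov[of v S Y] by simp
  then have "\<forall>s\<in>{..<S}. Y s \<bullet> v = 0" by (auto simp: sum_nonneg_eq_0_iff)
  then have "(\<chi> j. Y (h j)) *v v = 0"
    using assms(2) by (auto simp: vec_eq_iff matrix_vector_mult_def inner_vec_def)
  then have "\<not> invertible (\<chi> j. Y (h j))"
    using \<open>v \<noteq> 0\<close> by (simp add: invertible_left_inverse matrix_left_invertible_ker) blast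
  then show ?thesis by (simp add: invertible_det_nz)
qed

lemma null_sets_emp_cov_noninvertible:
  assumes "CARD('n) \<le> S"
  shows "{Y \<in> space (iid_sample S C). \<not> invertible (emp_cov S (Y :: nat \<Rightarrow> real^'n))}
    \<in> null_sets (iid_sample S C)"
proof -
  obtain h :: "'n \<Rightarrow> nat" where "bij_betw h UNIV {..<CARD('n)}"
    using ex_bij_betw_finite_nat[of "UNIV :: 'n set"] by (auto simp: atLeast0LessThan)
  then have "inj h" and hS: "h ` UNIV \<subseteq> {..<S}"
    using assms by (auto simp: bij_betw_def)
  have "{Y \<in> space (iid_sample S C). det (rows_or_axes UNIV (\<lambda>j. Y (h j))) = 0}
      \<in> null_sets (iid_sample S C)"
    unfolding iid_sample_def by (rule null_sets_det_rows_or_axes[OF \<open>inj h\<close> _ hS]) simp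
  moreover have "{Y \<in> space (iid_sample S C). \<not> invertible (emp_cov S Y)}
      \<subseteq> {Y \<in> space (iid_sample S C). det (rows_or_axes UNIV (\<lambda>j. Y (h j))) = 0}"
    using emp_cov_noninvertible_imp_det_rows_eq_0[OF _ hS] by (auto simp: rows_or_axes_def)
  moreover have "{Y \<in> space (iid_sample S C). \<not> invertible (emp_cov S Y)} \<in> sets (iid_sample S C)"
    using borel_measurable_det_emp_cov[of S C]
    by (simp add: invertible_det_nz pred_def[symmetric] pred_eq_const1)
  ultimately show ?thesis using null_sets_subset by blast
qed

text \<open>Neither \<open>f\<close> nor \<open>g\<close> needs to be measurable: as each is constant on \<open>N\<close>, their
  preimages differ from \<open>{x \<in> space M - N. g x \<in> A}\<close> by \<open>N\<close> or by nothing.\<close>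
lemma distr_eq_off_null_set:
  assumes N: "N \<in> null_sets M" and fg: "\<And>x. x \<in> space M - N \<Longrightarrow> f x = g x"
    and fN: "\<And>x y. x \<in> N \<Longrightarrow> y \<in> N \<Longrightarrow> f x = f y"
    and gN: "\<And>x y. x \<in> N \<Longrightarrow> y \<in> N \<Longrightarrow> g x = g y"
  shows "distr M K f = distr M K g"
proof -
  have "N \<subseteq> space M" using N null_sets.sets_into_space by blast
  have "emeasure M (h -` A \<inter> space M) = emeasure M {x \<in> space M - N. g x \<in> A}"
    if hg: "\<And>x. x \<in> space M - N \<Longrightarrow> h x = g x"
      and hN: "\<And>x y. x \<in> N \<Longrightarrow> y \<in> N \<Longrightarrow> h x = h y" for h A
  proof -
    define X where "X = {x \<in> space M - N. g x \<in> A}"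
    define E where "E = {x \<in> N. h x \<in> A}"
    have pre: "h -` A \<inter> space M = X \<union> E"
      using hg \<open>N \<subseteq> space M\<close> by (auto simp: X_def E_def)
    have "E = {} \<or> E = N"
    proof (cases "E = {}")
      case False
      then obtain x where x: "x \<in> N" "h x \<in> A" by (auto simp: E_def)
      have "h y \<in> A" if "y \<in> N" for y using hN[OF that x(1)] x(2) by simp
      then show ?thesis by (auto simp: E_def)
    qed simp
    then have E: "E \<in> null_sets M" using N by auto
    show ?thesis
    proof (cases "X \<in> sets M")
      case True
      then show ?thesis unfolding pre X_def[symmetric] using E by (simp add: emeasure_Un_null_set)
    next
      case False
      have "X = (X \<union> E) - E" by (auto simp: X_def E_def)
      then have "X \<union> E \<notin> sets M" using False E by (metis null_setsD2 sets.Diff)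
      then show ?thesis unfolding pre X_def[symmetric] using False by (simp add: emeasure_notin_sets)
    qed
  qed
  from this[OF fg fN] this[OF _ gN] show ?thesis
    unfolding distr_def by simp
qed

theorem lemma2:
  fixes C :: "real^('n::{finite,wellorder})^('n::{finite,wellorder})" and S :: nat
  assumes "spd C"
    and "S \<ge> CARD('n)"
  shows "distr (iid_sample S C) borel
           (\<lambda>X. kappa (precond (cholesky (emp_cov S X)) C))
       = distr (iid_sample S (mat 1)) borel
           (\<lambda>Y :: nat \<Rightarrow> real^('n::{finite,wellorder}). kappa (matrix_inv (emp_cov S Y)))"
proof -
  obtain F where "cholesky_factor C F" using cholesky_factor_cholesky[OF assms(1)] ..
  then have C: "C = F ** transpose F" and F: "invertible F"
    by (simp_all add: cholesky_factor_def cholesky_factor_invertible)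
  define N where "N = {Y :: nat \<Rightarrow> (real, 'n) vec \<in> space (iid_sample S (mat 1)).
    \<not> invertible (emp_cov S Y)}"
  have "distr (iid_sample S C) borel (\<lambda>X. kappa (precond (cholesky (emp_cov S X)) C))
      = distr (iid_sample S (mat 1)) borel
          (\<lambda>Y. kappa (precond (cholesky (F ** emp_cov S Y ** transpose F)) C))"
    unfolding C by (simp add: iid_sample_linear_change[OF F] emp_cov_restrict emp_cov_linear_image)
  also have "\<dots> = distr (iid_sample S (mat 1)) borel
      (\<lambda>Y :: nat \<Rightarrow> (real, 'n) vec. kappa (matrix_inv (emp_cov S Y)))"
  proof (rule distr_eq_off_null_set)
    show "N \<in> null_sets (iid_sample S (mat 1))"
      unfolding N_def by (rule null_sets_emp_cov_noninvertible[OF assms(2)])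
    show "kappa (precond (cholesky (F ** emp_cov S Y ** transpose F)) C)
        = kappa (matrix_inv (emp_cov S Y))" if "Y \<in> space (iid_sample S (mat 1)) - N" for Y
      using that unfolding C N_def by (intro kappa_precond_cholesky_congruence spd_emp_cov F) simp
    \<comment> \<open>on \<open>N\<close> both sides are the junk values of \<open>cholesky\<close> and \<open>matrix_inv\<close>\<close>
    show "kappa (precond (cholesky (F ** emp_cov S Y ** transpose F)) C)
        = kappa (precond (cholesky (F ** emp_cov S Y' ** transpose F)) C)"
      and "kappa (matrix_inv (emp_cov S Y)) = kappa (matrix_inv (emp_cov S Y'))"
      if "Y \<in> N" "Y' \<in> N" for Y Y'
      using that cholesky_congruence_noninvertible[of "emp_cov S Y" "emp_cov S Y'" F]
        matrix_inv_noninvertible[of "emp_cov S Y" "emp_cov S Y'"]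
      by (simp_all add: N_def)
  qed
  finally show ?thesis .
qed

end
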